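(* For each $n\ge0$ let $w(n)$ be the least integer $m\ge 0$ such that $a(m)\ge n$. If $n\ge 2$ and $k$ is such that $F_k\le n<F_{k+1}$, then $w(n)=F_k+1$.
   Context: Let $(F_n)_{n\ge 0}$ be the Fibonacci numbers: $F_0=0$, $F_1=1$, $F_n=F_{n-1}+F_{n-2}$ for $n\ge 2$. Define $(a(n))_{n\ge 0}$ (OEIS A105774) by $a(0)=0$, $a(1)=1$, and for $n\ge 2$, $a(n)=F_{j+1}-a(n-F_j)$, where $j\ge 2$ is the unique index with $F_j<n\le F_{j+1}$. *)

theory Defs
  imports "HOL-Number_Theory.Fib"
begin

definition fib_idx :: "nat \<Rightarrow> nat" where
  "fib_idx n = (THE j. 2 \<le> j \<and> fib j < n \<and> n \<le> fib (Suc j))"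

text \<open>OEIS A105774. The guard 0 < fib (fib_idx n) always holds for n >= 2
  (since fib_idx n >= 2); it only serves to make termination evident.\<close>
function A105774 :: "nat \<Rightarrow> int" where
  "A105774 n = (if n < 2 then int n
     else if 0 < fib (fib_idx n)
       then int (fib (Suc (fib_idx n))) - A105774 (n - fib (fib_idx n))
     else 0)"
  by pat_completeness auto
termination
  by (relation "measure id") auto

definition w :: "nat \<Rightarrow> nat" where
  "w n = (LEAST m. A105774 m \<ge> int n)"

end

theory Submission
  imports Defs
begin

text \<open>By induction, \<open>F_j \<le> a(m) < F_(j+1)\<close> whenever \<open>F_j < m \<le> F_(j+1)\<close>: the recursive
  argument \<open>m - F_j\<close> is at most \<open>F_(j-1)\<close>, so its value lies in \<open>[1, F_(j-1)]\<close>.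
  Hence every \<open>m \<le> F_k\<close> has \<open>a(m) < F_k \<le> n\<close>, while
  \<open>a(F_k + 1) = F_(k+1) - a(1) = F_(k+1) - 1 \<ge> n\<close>.\<close>

lemma le_fib_Suc: "n \<le> fib (Suc n)"
proof (induction n rule: fib.induct)
  case (3 n)
  have "fib (Suc n) \<ge> 1"
    using fib_neq_0_nat[of "Suc n"] by simp
  with "3" show ?case
    by simp
qed simp_all

lemma fib_less_fib_Suc: "2 \<le> j \<Longrightarrow> fib j < fib (Suc j)"
  using fib_neq_0_nat[of "j - 1"] by (cases j rule: fib.cases) auto

lemma fib_Suc_le_if_fib_less: "fib i < fib k \<Longrightarrow> fib (Suc i) \<le> fib k"
  by (metis fib_mono not_less not_less_eq_eq)

lemma fib_idx_eqI:
  assumes "2 \<le> j" "fib j < n" "n \<le> fib (Suc j)"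
  shows "fib_idx n = j"
  unfolding fib_idx_def
proof (rule the_equality)
  fix i
  assume i: "2 \<le> i \<and> fib i < n \<and> n \<le> fib (Suc i)"
  have "\<not> Suc i \<le> j" "\<not> Suc j \<le> i"
    using i assms fib_mono[of "Suc i" j] fib_mono[of "Suc j" i] by linarith+
  then show "i = j"
    by linarith
qed (use assms in simp)

lemma fib_idx:
  assumes "2 \<le> n"
  shows "2 \<le> fib_idx n" "fib (fib_idx n) < n" "n \<le> fib (Suc (fib_idx n))"
proof -
  define j where "j = (LEAST j. n \<le> fib (Suc j))"
  have upper: "n \<le> fib (Suc j)"
    unfolding j_def by (rule LeastI, rule le_fib_Suc)
  have "2 \<le> j"
  proof (rule ccontr)
    assume "\<not> 2 \<le> j"
    then have "j = 0 \<or> j = 1"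
      by linarith
    with upper assms show False
      by (auto simp: numeral_2_eq_2)
  qed
  have "\<not> n \<le> fib (Suc (j - 1))"
    unfolding j_def by (rule not_less_Least) (use \<open>2 \<le> j\<close> in \<open>simp add: j_def\<close>)
  with \<open>2 \<le> j\<close> have "fib j < n"
    by simp
  with upper \<open>2 \<le> j\<close> have "fib_idx n = j"
    by (rule_tac fib_idx_eqI) auto
  with upper \<open>2 \<le> j\<close> \<open>fib j < n\<close> show
    "2 \<le> fib_idx n" "fib (fib_idx n) < n" "n \<le> fib (Suc (fib_idx n))"
    by simp_all
qed

declare A105774.simps [simp del]

lemma A105774_less_2: "n < 2 \<Longrightarrow> A105774 n = int n"
  by (subst A105774.simps) simp

lemma A105774_rec:
  assumes "2 \<le> n"
  shows "A105774 n = int (fib (Suc (fib_idx n))) - A105774 (n - fib (fib_idx n))"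
  using assms fib_idx(1)[OF assms] fib_neq_0_nat[of "fib_idx n"]
  by (subst A105774.simps) simp

lemma A105774_bounds:
  assumes "2 \<le> m"
  shows "int (fib (fib_idx m)) \<le> A105774 m" "A105774 m < int (fib (Suc (fib_idx m)))"
proof -
  have "int (fib (fib_idx m)) \<le> A105774 m \<and> A105774 m < int (fib (Suc (fib_idx m)))"
    using assms
  proof (induction m rule: less_induct)
    case (less m)
    define j where "j = fib_idx m"
    define s where "s = m - fib j"
    have j: "2 \<le> j" "fib j < m" "m \<le> fib (Suc j)"
      using fib_idx[OF less.prems] unfolding j_def by auto
    obtain i where i: "j = Suc (Suc i)"
      using j(1) by (metis add_2_eq_Suc le_Suc_ex)
    have "1 \<le> s" "s \<le> fib (Suc i)" "s < m"
      using j i fib_neq_0_nat[of j] unfolding s_def by auto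
    have "1 \<le> A105774 s \<and> A105774 s \<le> int (fib (Suc i))"
    proof (cases "s = 1")
      case True
      then show ?thesis
        using fib_neq_0_nat[of "Suc i"] A105774_less_2[of 1] by simp
    next
      case False
      with \<open>1 \<le> s\<close> have "2 \<le> s"
        by simp
      have "fib (fib_idx s) < fib (Suc i)"
        using fib_idx(2)[OF \<open>2 \<le> s\<close>] \<open>s \<le> fib (Suc i)\<close> by linarith
      then have "fib (Suc (fib_idx s)) \<le> fib (Suc i)"
        by (rule fib_Suc_le_if_fib_less)
      moreover have "1 \<le> fib (fib_idx s)"
        using fib_idx(1)[OF \<open>2 \<le> s\<close>] fib_neq_0_nat[of "fib_idx s"] by simp
      ultimately show ?thesis
        using less.IH[OF \<open>s < m\<close> \<open>2 \<le> s\<close>] by linarith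
    qed
    moreover have "A105774 m = int (fib (Suc j)) - A105774 s"
      using A105774_rec[OF less.prems] unfolding j_def s_def .
    ultimately show ?case
      using i unfolding j_def by simp
  qed
  then show "int (fib (fib_idx m)) \<le> A105774 m" "A105774 m < int (fib (Suc (fib_idx m)))"
    by auto
qed

lemma A105774_fib_Suc:
  assumes "3 \<le> k"
  shows "A105774 (fib k + 1) = int (fib (Suc k)) - 1"
proof -
  have "1 \<le> fib k"
    using assms fib_neq_0_nat[of k] by simp
  have "fib_idx (fib k + 1) = k"
    using assms fib_less_fib_Suc[of k] by (intro fib_idx_eqI) auto
  with assms have "A105774 (fib k + 1) = int (fib (Suc k)) - A105774 1"
    using A105774_rec[of "fib k + 1"] \<open>1 \<le> fib k\<close> by simp
  then show ?thesis
    by (simp add: A105774_less_2)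
qed

lemma A105774_less_if_le_fib:
  assumes "m \<le> fib k" "2 \<le> n" "fib k \<le> n"
  shows "A105774 m < int n"
proof (cases "2 \<le> m")
  case True
  have "fib (Suc (fib_idx m)) \<le> fib k"
    using fib_idx(2)[OF True] assms(1) by (intro fib_Suc_le_if_fib_less) linarith
  with A105774_bounds(2)[OF True] assms(3) show ?thesis
    by linarith
next
  case False
  with assms(2) show ?thesis
    by (simp add: A105774_less_2)
qed

theorem proposition20:
  fixes n k :: nat
  assumes "n \<ge> 2" and "fib k \<le> n" and "n < fib (Suc k)"
  shows "w n = fib k + 1"
proof -
  have "3 \<le> k"
  proof (rule ccontr)
    assume "\<not> 3 \<le> k"
    then have "k = 0 \<or> k = 1 \<or> k = 2"
      by linarith
    with assms show False
      by (auto simp: numeral_2_eq_2)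
  qed
  then have "int n \<le> A105774 (fib k + 1)"
    using assms(3) A105774_fib_Suc by simp
  moreover have "A105774 m < int n" if "m < fib k + 1" for m
    using that assms(1,2) by (intro A105774_less_if_le_fib) auto
  ultimately show ?thesis
    unfolding w_def by (intro Least_equality) (auto simp: not_le[symmetric])
qed

end
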